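(* Let $D\ge1$, $f\in(0,1]$, and let $F=(F_{\alpha\beta})_{\alpha,\beta=1}^D$ be a real symmetric matrix with $f\le F_{\alpha\beta}\le1$ for all $\alpha,\beta$. Let $\{|\alpha\rangle\}$ be an orthonormal basis of $\mathbb C^D$ and define on $\mathbb C^D\otimes\mathbb C^D$ the operator $K=\frac1D\sum_{\alpha,\beta}F_{\alpha\beta}^2\,|\alpha,\alpha\rangle\langle\beta,\beta|$. Then $K$ has a unique (up to scalar) eigenvector $|\Psi\rangle=\sum_\alpha x_\alpha|\alpha,\alpha\rangle$ of largest eigenvalue $\lambda$, with all $x_\alpha>0$, $\max_\alpha x_\alpha/\min_\alpha x_\alpha\le 1/f^2$, and $f^2\le\lambda\le1$; moreover every other eigenvalue of $K$ is at most $(1-f^4)\lambda$. Consequently, for any real $a$, $\varepsilon>0$, the operator $M=a\,\mathbb I+\varepsilon^2 K$ (restricted to $\mathbb C^D\otimes\mathbb C^D$) has unique top eigenvector $|\Psi\rangle$ with eigenvalue $a+\varepsilon^2\lambda$, and spectral gap at least $\varepsilon^2f^4\lambda$. *)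

theory Defs
  imports "HOL-Analysis.Analysis"
begin

text \<open>C^D is modelled as complex^'n with D = CARD('n); C^D (x) C^D as complex^('n \<times> 'n).\<close>

definition tensor :: "complex ^ 'n \<Rightarrow> complex ^ 'n \<Rightarrow> complex ^ ('n \<times> 'n)" where
  "tensor u v = (\<chi> p. u $ fst p * v $ snd p)"

definition outer :: "complex ^ 'm \<Rightarrow> complex ^ 'm \<Rightarrow> complex ^ 'm ^ 'm" where
  "outer u v = (\<chi> p q. u $ p * cnj (v $ q))"

text \<open>An orthonormal family indexed by 'n in complex^'n (hence an orthonormal basis).\<close>
definition orthonormal_family :: "('n::finite \<Rightarrow> complex ^ 'n) \<Rightarrow> bool" where
  "orthonormal_family b \<longleftrightarrow>
     (\<forall>\<alpha> \<beta>. (\<Sum>i\<in>UNIV. cnj (b \<alpha> $ i) * b \<beta> $ i) = (if \<alpha> = \<beta> then 1 else 0))"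

definition Kop :: "real ^ 'n ^ 'n \<Rightarrow> ('n::finite \<Rightarrow> complex ^ 'n) \<Rightarrow> complex ^ ('n \<times> 'n) ^ ('n \<times> 'n)" where
  "Kop F b = (\<Sum>\<alpha>\<in>UNIV. \<Sum>\<beta>\<in>UNIV.
      (((F $ \<alpha> $ \<beta>)\<^sup>2) / real CARD('n)) *\<^sub>R outer (tensor (b \<alpha>) (b \<alpha>)) (tensor (b \<beta>) (b \<beta>)))"

definition is_eigenpair :: "complex ^ 'm ^ 'm \<Rightarrow> complex \<Rightarrow> complex ^ 'm \<Rightarrow> bool" where
  "is_eigenpair A \<mu> v \<longleftrightarrow> v \<noteq> 0 \<and> A *v v = \<mu> *s v"

end

theory Submission
  imports Defs
begin

(* On the span of the vectors |alpha,alpha> the operator K acts as the symmetric matrix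
   A = (F_ab^2 / D), whose entries lie in [f^2/D, 1/D], and it annihilates the orthogonal
   complement, so everything reduces to the spectrum of A.  A maximiser of the quadratic form of A
   on the unit sphere may be replaced by its absolute value, which gives a positive eigenvector x;
   comparing lam x_i with the row sums of A yields f^2 <= lam <= 1 and f^2 x_i <= x_j.  For the gap,
   subtract from A the largest multiple t x x^T that keeps it entrywise nonnegative: this does not
   change A on vectors orthogonal to x, and a Collatz-Wielandt estimate bounds their eigenvalues by
   lam - t |x|^2 <= lam - f^2 lam^2 <= (1 - f^4) lam. *)

definition quad_form :: "('n::finite \<Rightarrow> 'n \<Rightarrow> real) \<Rightarrow> ('n \<Rightarrow> real) \<Rightarrow> real" where
  "quad_form A u = (\<Sum>i\<in>UNIV. \<Sum>j\<in>UNIV. A i j * u i * u j)"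

lemma finite_range_Max_attained:
  fixes x :: "'n::finite \<Rightarrow> 'a::linorder"
  obtains i where "x i = Max (range x)" and "\<And>j. x j \<le> x i"
proof -
  have "Max (range x) \<in> range x" by (rule Max_in) auto
  then obtain i where "Max (range x) = x i" by (rule rangeE)
  moreover have "x j \<le> Max (range x)" for j by (rule Max_ge) auto
  ultimately show thesis using that[of i] by simp
qed

lemma finite_range_Min_attained:
  fixes x :: "'n::finite \<Rightarrow> 'a::linorder"
  obtains i where "x i = Min (range x)" and "\<And>j. x i \<le> x j"
proof -
  have "Min (range x) \<in> range x" by (rule Min_in) auto
  then obtain i where "Min (range x) = x i" by (rule rangeE)
  moreover have "Min (range x) \<le> x j" for j by (rule Min_le) auto
  ultimately show thesis using that[of i] by simp
qed

lemma Max_div_Min_range_le: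
  fixes x :: "'n::finite \<Rightarrow> real"
  assumes xpos: "\<And>i. 0 < x i" and c: "0 < c" and ratio: "\<And>i j. c * x i \<le> x j"
  shows "Max (range x) / Min (range x) \<le> 1 / c"
proof -
  obtain i where i: "x i = Max (range x)" using finite_range_Max_attained by blast
  obtain j where j: "x j = Min (range x)" using finite_range_Min_attained by blast
  show ?thesis using ratio[of i j] xpos[of j] c by (simp flip: i j add: field_simps)
qed

lemma quad_form_attains_max_on_unit_sphere:
  fixes A :: "'n::finite \<Rightarrow> 'n \<Rightarrow> real"
  obtains z where "(\<Sum>i\<in>UNIV. (z i)\<^sup>2) = 1"
    and "\<And>u. (\<Sum>i\<in>UNIV. (u i)\<^sup>2) = 1 \<Longrightarrow> quad_form A u \<le> quad_form A z"
proof -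
  have norm_sq: "(norm y)\<^sup>2 = (\<Sum>i\<in>UNIV. (y $ i)\<^sup>2)" for y :: "real ^ 'n"
    by (simp add: norm_vec_def L2_set_def sum_nonneg)
  have "continuous_on (sphere 0 1) (\<lambda>y::real ^ 'n. quad_form A (\<lambda>i. y $ i))"
    unfolding quad_form_def by (intro continuous_intros)
  moreover have "sphere (0::real ^ 'n) 1 \<noteq> {}" by simp
  ultimately obtain z where z: "z \<in> sphere (0::real ^ 'n) 1"
    and zmax: "\<forall>y\<in>sphere 0 1. quad_form A (\<lambda>i. y $ i) \<le> quad_form A (\<lambda>i. z $ i)"
    using continuous_attains_sup[OF compact_sphere] by blast
  show thesis
  proof (rule that)
    show "(\<Sum>i\<in>UNIV. (z $ i)\<^sup>2) = 1" using z norm_sq[of z] by simp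
  next
    fix u :: "'n \<Rightarrow> real" assume "(\<Sum>i\<in>UNIV. (u i)\<^sup>2) = 1"
    then have "(norm (\<chi> i. u i))\<^sup>2 = 1" using norm_sq[of "\<chi> i. u i"] by simp
    then have "norm (\<chi> i. u i) = 1" using norm_ge_zero[of "\<chi> i. u i"] by (auto simp: power2_eq_1_iff)
    then show "quad_form A u \<le> quad_form A (\<lambda>i. z $ i)" using zmax by force
  qed
qed

lemma quad_form_le_scaled_max:
  fixes A :: "'n::finite \<Rightarrow> 'n \<Rightarrow> real"
  assumes max: "\<And>u. (\<Sum>i\<in>UNIV. (u i)\<^sup>2) = 1 \<Longrightarrow> quad_form A u \<le> lam"
  shows "quad_form A u \<le> lam * (\<Sum>i\<in>UNIV. (u i)\<^sup>2)"
proof (cases "\<forall>i. u i = 0")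
  case True
  then show ?thesis by (simp add: quad_form_def)
next
  case False
  define s where "s = (\<Sum>i\<in>UNIV. (u i)\<^sup>2)"
  obtain k where "u k \<noteq> 0" using False by blast
  then have s: "s > 0" unfolding s_def by (intro sum_pos2[where i=k]) auto
  define r where "r = sqrt s"
  have r: "r > 0" "r\<^sup>2 = s" using s by (auto simp: r_def)
  have "(\<Sum>i\<in>UNIV. (u i / r)\<^sup>2) = 1"
    using r s by (simp add: s_def power_divide flip: sum_divide_distrib)
  then have "quad_form A (\<lambda>i. u i / r) \<le> lam" by (rule max)
  moreover have "quad_form A (\<lambda>i. u i / r) = quad_form A u / r\<^sup>2"
    by (simp add: quad_form_def sum_divide_distrib power2_eq_square)
  ultimately show ?thesis using r s by (simp add: s_def divide_le_eq)
qed

lemma linear_coeff_eq_0_if_quadratic_nonpos: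
  fixes a c :: real
  assumes "\<And>t. 2 * t * a + t\<^sup>2 * c \<le> 0"
  shows "a = 0"
proof -
  define d where "d = \<bar>c\<bar> + 1"
  have d: "d > 0" "2 * d + c > 0" by (auto simp: d_def)
  have "2 * (a / d) * a + (a / d)\<^sup>2 * c \<le> 0" by (rule assms)
  then have "a\<^sup>2 * (2 * d + c) / d\<^sup>2 \<le> 0" using d by (simp add: field_simps power2_eq_square)
  then have "a\<^sup>2 * (2 * d + c) \<le> 0" using d by (simp add: divide_le_0_iff)
  then have "a\<^sup>2 \<le> 0" using d by (simp add: mult_le_0_iff)
  then show ?thesis by simp
qed

text \<open>A maximiser of the Rayleigh quotient is an eigenvector: the quadratic form, perturbed in
  the direction of a coordinate vector, cannot exceed its maximum.\<close>

lemma quad_form_maximizer_is_eigenvector: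
  fixes A :: "'n::finite \<Rightarrow> 'n \<Rightarrow> real"
  assumes sym: "\<And>i j. A i j = A j i"
    and le: "\<And>u. quad_form A u \<le> lam * (\<Sum>i\<in>UNIV. (u i)\<^sup>2)"
    and w1: "(\<Sum>i\<in>UNIV. (w i)\<^sup>2) = 1" and wq: "quad_form A w = lam"
  shows "(\<Sum>j\<in>UNIV. A k j * w j) = lam * w k"
proof -
  have "2 * t * ((\<Sum>j\<in>UNIV. A k j * w j) - lam * w k) + t\<^sup>2 * (A k k - lam) \<le> 0" for t
  proof -
    define u where "u i = w i + (if i = k then t else 0)" for i
    have expand: "A i j * u i * u j = A i j * w i * w j + (if j = k then t * A i k * w i else 0)
       + (if i = k then t * A k j * w j else 0) + (if i = k \<and> j = k then t\<^sup>2 * A k k else 0)" for i j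
      by (simp add: u_def algebra_simps power2_eq_square)
    have row: "(\<Sum>j\<in>UNIV. if i = k then t * A k j * w j else 0)
        = (if i = k then t * (\<Sum>j\<in>UNIV. A k j * w j) else 0)" for i
      by (simp add: sum_distrib_left mult.assoc)
    have diag: "(\<Sum>j\<in>UNIV. if i = k \<and> j = k then t\<^sup>2 * A k k else 0)
        = (if i = k then t\<^sup>2 * A k k else 0)" for i
      by auto
    have "quad_form A u = quad_form A w + t * (\<Sum>i\<in>UNIV. A i k * w i) + t * (\<Sum>j\<in>UNIV. A k j * w j)
        + t\<^sup>2 * A k k"
      unfolding quad_form_def expand by (simp add: sum.distrib row diag sum_distrib_left mult.assoc)
    also have "(\<Sum>i\<in>UNIV. A i k * w i) = (\<Sum>j\<in>UNIV. A k j * w j)" using sym by metis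
    finally have q: "quad_form A u = lam + 2 * t * (\<Sum>j\<in>UNIV. A k j * w j) + t\<^sup>2 * A k k"
      using wq by simp
    have "(u i)\<^sup>2 = (w i)\<^sup>2 + (if i = k then 2 * t * w i + t\<^sup>2 else 0)" for i
      by (simp add: u_def algebra_simps power2_eq_square)
    then have "(\<Sum>i\<in>UNIV. (u i)\<^sup>2) = 1 + 2 * t * w k + t\<^sup>2" by (simp add: sum.distrib w1)
    then show ?thesis using le[of u] q by (simp add: algebra_simps)
  qed
  then show ?thesis using linear_coeff_eq_0_if_quadratic_nonpos by fastforce
qed

lemma symmetric_positive_matrix_positive_eigenvector:
  fixes A :: "'n::finite \<Rightarrow> 'n \<Rightarrow> real"
  assumes sym: "\<And>i j. A i j = A j i" and pos: "\<And>i j. 0 < A i j"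
  obtains x lam where "\<And>i. 0 < x i" and "\<And>i. (\<Sum>j\<in>UNIV. A i j * x j) = lam * x i"
proof -
  obtain z where z1: "(\<Sum>i\<in>UNIV. (z i)\<^sup>2) = 1"
    and zmax: "\<And>u. (\<Sum>i\<in>UNIV. (u i)\<^sup>2) = 1 \<Longrightarrow> quad_form A u \<le> quad_form A z"
    using quad_form_attains_max_on_unit_sphere by blast
  define lam where "lam = quad_form A z"
  have le: "quad_form A u \<le> lam * (\<Sum>i\<in>UNIV. (u i)\<^sup>2)" for u
    using quad_form_le_scaled_max[of A lam] zmax unfolding lam_def by blast
  define w where "w i = \<bar>z i\<bar>" for i
  have w1: "(\<Sum>i\<in>UNIV. (w i)\<^sup>2) = 1" using z1 by (simp add: w_def)
  have "quad_form A z \<le> quad_form A w" unfolding quad_form_def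
  proof (intro sum_mono)
    fix i j
    have "A i j * z i * z j \<le> \<bar>A i j * z i * z j\<bar>" by simp
    also have "\<dots> = A i j * w i * w j" using pos[of i j] by (simp add: w_def abs_mult)
    finally show "A i j * z i * z j \<le> A i j * w i * w j" .
  qed
  then have "quad_form A w = lam" using le[of w] w1 lam_def by simp
  then have eig: "(\<Sum>j\<in>UNIV. A k j * w j) = lam * w k" for k
    using quad_form_maximizer_is_eigenvector[OF sym le w1] by blast
  obtain j where "w j \<noteq> 0" using w1 by force
  then have wj: "w j > 0" by (simp add: w_def)
  have "0 < w k" for k
  proof -
    have "0 < (\<Sum>j\<in>UNIV. A k j * w j)"
      using pos wj by (intro sum_pos2[where i=j]) (auto simp: w_def less_imp_le)
    then have "0 < lam * w k" using eig by simp
    then show ?thesis by (simp add: w_def zero_less_mult_iff)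
  qed
  then show thesis using that eig by blast
qed

lemma positive_eigenvector_bounds:
  fixes A :: "'n::finite \<Rightarrow> 'n \<Rightarrow> real"
  assumes lb: "\<And>i j. f\<^sup>2 / real CARD('n) \<le> A i j" and ub: "\<And>i j. A i j \<le> 1 / real CARD('n)"
    and f: "0 < f" and xpos: "\<And>i. 0 < x i" and eig: "\<And>i. (\<Sum>j\<in>UNIV. A i j * x j) = lam * x i"
  shows "f\<^sup>2 \<le> lam" and "lam \<le> 1" and "\<And>i j. f\<^sup>2 * x i \<le> x j"
proof -
  define D where "D = real CARD('n)"
  define S where "S = (\<Sum>j\<in>UNIV. x j)"
  have D: "0 < D" by (simp add: D_def)
  have up: "lam * x i \<le> S / D" for i
  proof -
    have "lam * x i = (\<Sum>j\<in>UNIV. A i j * x j)" using eig by simp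
    also have "\<dots> \<le> (\<Sum>j\<in>UNIV. 1 / D * x j)"
      using ub xpos by (intro sum_mono mult_right_mono) (auto simp: D_def less_imp_le)
    finally show ?thesis by (simp add: S_def sum_divide_distrib)
  qed
  have lo: "f\<^sup>2 * (S / D) \<le> lam * x i" for i
  proof -
    have "f\<^sup>2 * (S / D) = (\<Sum>j\<in>UNIV. f\<^sup>2 / D * x j)" by (simp add: S_def sum_distrib_left sum_divide_distrib)
    also have "\<dots> \<le> (\<Sum>j\<in>UNIV. A i j * x j)"
      using lb xpos by (intro sum_mono mult_right_mono) (auto simp: D_def less_imp_le)
    finally show ?thesis using eig by simp
  qed
  obtain iM where iM: "\<And>j. x j \<le> x iM" using finite_range_Max_attained by blast
  obtain im where im: "\<And>j. x im \<le> x j" using finite_range_Min_attained by blast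
  have "S \<le> D * x iM" unfolding S_def D_def using sum_bounded_above[of UNIV x "x iM"] iM by simp
  then have "S / D \<le> x iM" using D by (simp add: pos_divide_le_eq mult.commute)
  then have "lam * x iM \<le> x iM" using up[of iM] by linarith
  then show "lam \<le> 1" using xpos[of iM] by simp
  have "D * x im \<le> S" unfolding S_def D_def using sum_bounded_below[of UNIV "x im" x] im by simp
  then have "x im \<le> S / D" using D by (simp add: pos_le_divide_eq mult.commute)
  then have "f\<^sup>2 * x im \<le> f\<^sup>2 * (S / D)" by (rule mult_left_mono) simp
  then have "f\<^sup>2 * x im \<le> lam * x im" using lo[of im] by linarith
  then show lam: "f\<^sup>2 \<le> lam" using xpos[of im] by simp
  have "0 < f\<^sup>2" using f by simp
  then have lam_pos: "0 < lam" using lam by linarith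
  fix i j
  have "lam * (f\<^sup>2 * x i) \<le> f\<^sup>2 * (S / D)"
    using mult_left_mono[OF up[of i], of "f\<^sup>2"] by (simp add: mult.left_commute)
  also have "\<dots> \<le> lam * x j" by (rule lo)
  finally show "f\<^sup>2 * x i \<le> x j" using lam_pos by simp
qed

text \<open>Collatz--Wielandt: evaluate the eigenvalue equation at a coordinate maximising
  \<open>\<bar>c i\<bar> / x i\<close>.\<close>

lemma nonneg_matrix_eigenvalue_norm_le:
  fixes B :: "'n::finite \<Rightarrow> 'n \<Rightarrow> real" and x :: "'n \<Rightarrow> real" and c :: "'n \<Rightarrow> complex"
  assumes B0: "\<And>i j. 0 \<le> B i j" and xpos: "\<And>i. 0 < x i"
    and Bx: "\<And>i. (\<Sum>j\<in>UNIV. B i j * x j) = r * x i"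
    and Bc: "\<And>i. (\<Sum>j\<in>UNIV. complex_of_real (B i j) * c j) = \<mu> * c i" and c0: "\<exists>j. c j \<noteq> 0"
  shows "cmod \<mu> \<le> r"
proof -
  define g where "g i = cmod (c i) / x i" for i
  obtain i where gmax: "\<And>j. g j \<le> g i" using finite_range_Max_attained by blast
  obtain j where "c j \<noteq> 0" using c0 by auto
  then have "g j > 0" using xpos[of j] by (simp add: g_def)
  then have gpos: "g i > 0" using gmax[of j] by linarith
  have ci: "cmod (c j) = g j * x j" for j using xpos[of j] by (simp add: g_def)
  have "cmod \<mu> * cmod (c i) = cmod (\<Sum>j\<in>UNIV. complex_of_real (B i j) * c j)"
    using Bc[of i] by (simp add: norm_mult)
  also have "\<dots> \<le> (\<Sum>j\<in>UNIV. B i j * cmod (c j))"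
    using norm_sum[of "\<lambda>j. complex_of_real (B i j) * c j"] B0 by (simp add: norm_mult)
  also have "\<dots> \<le> (\<Sum>j\<in>UNIV. B i j * (g i * x j))"
    using B0 gmax xpos ci by (intro sum_mono mult_left_mono) (auto intro: mult_right_mono less_imp_le)
  also have "\<dots> = g i * (\<Sum>j\<in>UNIV. B i j * x j)" by (simp add: sum_distrib_left algebra_simps)
  also have "\<dots> = r * cmod (c i)" using Bx[of i] ci[of i] by simp
  finally show ?thesis using gpos xpos[of i] ci[of i] by simp
qed

lemma perron_eigenvalue_sq_le:
  fixes A :: "'n::finite \<Rightarrow> 'n \<Rightarrow> real"
  assumes ub: "\<And>i j. A i j \<le> 1 / real CARD('n)"
    and xpos: "\<And>i. 0 < x i" and eig: "\<And>i. (\<Sum>j\<in>UNIV. A i j * x j) = lam * x i"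
    and lam0: "0 \<le> lam"
  shows "real CARD('n) * (lam * x k)\<^sup>2 \<le> (\<Sum>j\<in>UNIV. (x j)\<^sup>2)"
proof -
  define D where "D = real CARD('n)"
  define S where "S = (\<Sum>j\<in>UNIV. x j)"
  have D: "D > 0" by (simp add: D_def)
  have "lam * x k = (\<Sum>j\<in>UNIV. A k j * x j)" using eig by simp
  also have "\<dots> \<le> (\<Sum>j\<in>UNIV. 1 / D * x j)"
    using ub xpos by (intro sum_mono mult_right_mono) (auto simp: D_def less_imp_le)
  finally have "lam * x k \<le> S / D" by (simp add: S_def sum_divide_distrib)
  moreover have "0 \<le> lam * x k" using lam0 xpos[of k] by simp
  ultimately have "D * (lam * x k)\<^sup>2 \<le> D * (S / D)\<^sup>2" using D by (simp add: power_mono)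
  also have "\<dots> = S\<^sup>2 / D" using D by (simp add: power2_eq_square)
  also have "\<dots> \<le> (\<Sum>j\<in>UNIV. (x j)\<^sup>2)"
    using sum_squared_le_sum_of_squares[of x UNIV] D by (simp add: S_def D_def pos_divide_le_eq)
  finally show ?thesis by (simp add: D_def)
qed

lemma eigenvalue_orthogonal_to_perron_vector_le:
  fixes A :: "'n::finite \<Rightarrow> 'n \<Rightarrow> real"
  assumes lb: "\<And>i j. f\<^sup>2 / real CARD('n) \<le> A i j"
    and ub: "\<And>i j. A i j \<le> 1 / real CARD('n)"
    and xpos: "\<And>i. 0 < x i" and eig: "\<And>i. (\<Sum>j\<in>UNIV. A i j * x j) = lam * x i"
    and lam0: "0 \<le> lam"
    and ceig: "\<And>i. (\<Sum>j\<in>UNIV. complex_of_real (A i j) * c j) = \<mu> * c i"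
    and orth: "(\<Sum>j\<in>UNIV. complex_of_real (x j) * c j) = 0" and c0: "\<exists>j. c j \<noteq> 0"
  shows "cmod \<mu> \<le> lam - f\<^sup>2 * lam\<^sup>2"
proof -
  define D where "D = real CARD('n)"
  have D: "D > 0" by (simp add: D_def)
  obtain iM where xmax: "\<And>j. x j \<le> x iM" using finite_range_Max_attained by blast
  define xM where "xM = x iM"
  have xM: "xM > 0" using xpos by (simp add: xM_def)
  define t where "t = f\<^sup>2 / D / xM\<^sup>2"
  have t: "t \<ge> 0" using D by (simp add: t_def)
  define N where "N = (\<Sum>j\<in>UNIV. (x j)\<^sup>2)"
  define B where "B i j = A i j - t * x i * x j" for i j
  have "0 \<le> B i j" for i j
  proof -
    have "x i * x j \<le> xM * xM" using xmax xpos unfolding xM_def by (simp add: mult_mono less_imp_le)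
    then have "t * (x i * x j) \<le> t * xM\<^sup>2" using t by (simp add: power2_eq_square mult_left_mono)
    also have "\<dots> = f\<^sup>2 / D" using xM by (simp add: t_def)
    also have "\<dots> \<le> A i j" using lb by (simp add: D_def)
    finally show ?thesis by (simp add: B_def algebra_simps)
  qed
  moreover have "(\<Sum>j\<in>UNIV. B i j * x j) = (lam - t * N) * x i" for i
    using eig[of i] by (simp add: B_def left_diff_distrib sum_subtractf N_def sum_distrib_left
        power2_eq_square algebra_simps)
  moreover have "(\<Sum>j\<in>UNIV. complex_of_real (B i j) * c j) = \<mu> * c i" for i
  proof -
    have "(\<Sum>j\<in>UNIV. complex_of_real (B i j) * c j) = (\<Sum>j\<in>UNIV. complex_of_real (A i j) * c j)
        - complex_of_real (t * x i) * (\<Sum>j\<in>UNIV. complex_of_real (x j) * c j)"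
      by (simp add: B_def left_diff_distrib sum_subtractf sum_distrib_left algebra_simps)
    then show ?thesis using ceig orth by simp
  qed
  ultimately have "cmod \<mu> \<le> lam - t * N"
    using nonneg_matrix_eigenvalue_norm_le[of B x "lam - t * N" c \<mu>] xpos c0 by blast
  moreover have "f\<^sup>2 * lam\<^sup>2 = t * (D * (lam * xM)\<^sup>2)"
    using D xM by (simp add: t_def power_mult_distrib)
  moreover have "\<dots> \<le> t * N"
    using perron_eigenvalue_sq_le[OF ub xpos eig lam0, of iM] t
    by (simp add: D_def N_def xM_def mult_left_mono)
  ultimately show ?thesis by linarith
qed

lemma symmetric_real_matrix_eigenvalue_real:
  fixes A :: "'n::finite \<Rightarrow> 'n \<Rightarrow> real"
  assumes sym: "\<And>i j. A i j = A j i"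
    and ceig: "\<And>i. (\<Sum>j\<in>UNIV. complex_of_real (A i j) * c j) = \<mu> * c i"
    and c0: "\<exists>j. c j \<noteq> 0"
  shows "\<mu> \<in> \<real>"
proof -
  define T where "T = (\<Sum>i\<in>UNIV. \<Sum>j\<in>UNIV. complex_of_real (A i j) * cnj (c i) * c j)"
  define N where "N = (\<Sum>i\<in>UNIV. (cmod (c i))\<^sup>2)"
  have "T = (\<Sum>i\<in>UNIV. cnj (c i) * (\<Sum>j\<in>UNIV. complex_of_real (A i j) * c j))"
    by (simp add: T_def sum_distrib_left algebra_simps)
  also have "\<dots> = \<mu> * (\<Sum>i\<in>UNIV. cnj (c i) * c i)" using ceig by (simp add: sum_distrib_left algebra_simps)
  also have "(\<Sum>i\<in>UNIV. cnj (c i) * c i) = complex_of_real N"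
    unfolding N_def of_real_sum complex_norm_square by (simp add: mult.commute)
  finally have T: "T = \<mu> * complex_of_real N" .
  have "cnj T = (\<Sum>i\<in>UNIV. \<Sum>j\<in>UNIV. complex_of_real (A i j) * c i * cnj (c j))"
    by (simp add: T_def)
  also have "\<dots> = (\<Sum>j\<in>UNIV. \<Sum>i\<in>UNIV. complex_of_real (A i j) * c i * cnj (c j))"
    by (rule sum.swap)
  also have "\<dots> = T" unfolding T_def using sym by (simp add: algebra_simps)
  finally have "cnj \<mu> * complex_of_real N = \<mu> * complex_of_real N" using T by simp
  moreover obtain j where "c j \<noteq> 0" using c0 by auto
  then have "N > 0" unfolding N_def by (intro sum_pos2[where i=j]) auto
  ultimately have "cnj \<mu> = \<mu>" by simp
  then show ?thesis using Reals_cnj_iff by blast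
qed

lemma symmetric_matrix_eigenvectors_orthogonal:
  fixes A :: "'n::finite \<Rightarrow> 'n \<Rightarrow> real"
  assumes sym: "\<And>i j. A i j = A j i"
    and eig: "\<And>i. (\<Sum>j\<in>UNIV. A i j * x j) = lam * x i"
    and ceig: "\<And>i. (\<Sum>j\<in>UNIV. complex_of_real (A i j) * c j) = \<mu> * c i"
    and ne: "\<mu> \<noteq> complex_of_real lam"
  shows "(\<Sum>j\<in>UNIV. complex_of_real (x j) * c j) = 0"
proof -
  have col: "(\<Sum>i\<in>UNIV. x i * A i j) = lam * x j" for j
    using eig[of j] by (simp add: sym[of _ j] mult.commute)
  have "\<mu> * (\<Sum>j\<in>UNIV. complex_of_real (x j) * c j)
      = (\<Sum>i\<in>UNIV. complex_of_real (x i) * (\<Sum>j\<in>UNIV. complex_of_real (A i j) * c j))"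
    using ceig by (simp add: sum_distrib_left algebra_simps)
  also have "\<dots> = (\<Sum>i\<in>UNIV. \<Sum>j\<in>UNIV. complex_of_real (x i * A i j) * c j)"
    by (simp add: sum_distrib_left algebra_simps)
  also have "\<dots> = (\<Sum>j\<in>UNIV. \<Sum>i\<in>UNIV. complex_of_real (x i * A i j) * c j)"
    by (rule sum.swap)
  also have "\<dots> = (\<Sum>j\<in>UNIV. complex_of_real (\<Sum>i\<in>UNIV. x i * A i j) * c j)"
    by (simp add: sum_distrib_right)
  also have "\<dots> = complex_of_real lam * (\<Sum>j\<in>UNIV. complex_of_real (x j) * c j)"
    by (simp add: col sum_distrib_left algebra_simps)
  finally show ?thesis using ne by simp
qed

lemma perron_eigenvalue_simple:
  fixes A :: "'n::finite \<Rightarrow> 'n \<Rightarrow> real"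
  assumes lb: "\<And>i j. f\<^sup>2 / real CARD('n) \<le> A i j" and ub: "\<And>i j. A i j \<le> 1 / real CARD('n)"
    and f: "0 < f" and xpos: "\<And>i. 0 < x i" and eig: "\<And>i. (\<Sum>j\<in>UNIV. A i j * x j) = lam * x i"
    and ceig: "\<And>i. (\<Sum>j\<in>UNIV. complex_of_real (A i j) * c j) = complex_of_real lam * c i"
  obtains k where "\<And>i. c i = k * complex_of_real (x i)"
proof -
  have "f\<^sup>2 \<le> lam" by (rule positive_eigenvector_bounds(1)[OF lb ub f xpos eig])
  moreover have "0 < f\<^sup>2" using f by simp
  ultimately have lam_pos: "0 < lam" by linarith
  define N where "N = (\<Sum>j\<in>UNIV. (x j)\<^sup>2)"
  have N: "N > 0" unfolding N_def using xpos by (intro sum_pos) (auto simp: less_imp_neq[symmetric])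
  define k where "k = (\<Sum>j\<in>UNIV. complex_of_real (x j) * c j) / complex_of_real N"
  define d where "d i = c i - k * complex_of_real (x i)" for i
  have deig: "(\<Sum>j\<in>UNIV. complex_of_real (A i j) * d j) = complex_of_real lam * d i" for i
  proof -
    have "(\<Sum>j\<in>UNIV. complex_of_real (A i j) * d j) =
        (\<Sum>j\<in>UNIV. complex_of_real (A i j) * c j) - k * complex_of_real (\<Sum>j\<in>UNIV. A i j * x j)"
      by (simp add: d_def right_diff_distrib sum_subtractf sum_distrib_left algebra_simps)
    also have "\<dots> = complex_of_real lam * c i - k * complex_of_real (lam * x i)"
      using ceig[of i] eig[of i] by simp
    finally show ?thesis by (simp add: d_def algebra_simps)
  qed
  have dorth: "(\<Sum>j\<in>UNIV. complex_of_real (x j) * d j) = 0"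
  proof -
    have "(\<Sum>j\<in>UNIV. complex_of_real (x j) * d j) =
       (\<Sum>j\<in>UNIV. complex_of_real (x j) * c j) - k * complex_of_real N"
      by (simp add: d_def N_def right_diff_distrib sum_subtractf sum_distrib_left algebra_simps
          power2_eq_square)
    then show ?thesis using N by (simp add: k_def)
  qed
  have "d j = 0" for j
  proof (rule ccontr)
    assume "d j \<noteq> 0"
    then have "cmod (complex_of_real lam) \<le> lam - f\<^sup>2 * lam\<^sup>2"
      using eigenvalue_orthogonal_to_perron_vector_le[OF lb ub xpos eig _ deig dorth] lam_pos by auto
    moreover have "0 < f\<^sup>2 * lam\<^sup>2" using lam_pos f by simp
    ultimately show False using lam_pos by simp
  qed
  then show thesis using that[of k] by (simp add: d_def)
qed

lemma perron_spectral_gap: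
  fixes A :: "'n::finite \<Rightarrow> 'n \<Rightarrow> real"
  assumes sym: "\<And>i j. A i j = A j i"
    and lb: "\<And>i j. f\<^sup>2 / real CARD('n) \<le> A i j" and ub: "\<And>i j. A i j \<le> 1 / real CARD('n)"
    and f: "0 < f" and xpos: "\<And>i. 0 < x i" and eig: "\<And>i. (\<Sum>j\<in>UNIV. A i j * x j) = lam * x i"
    and ceig: "\<And>i. (\<Sum>j\<in>UNIV. complex_of_real (A i j) * c j) = \<mu> * c i"
    and c0: "\<exists>j. c j \<noteq> 0" and ne: "\<mu> \<noteq> complex_of_real lam"
  shows "cmod \<mu> \<le> (1 - f ^ 4) * lam"
proof -
  have lam: "f\<^sup>2 \<le> lam" by (rule positive_eigenvector_bounds(1)[OF lb ub f xpos eig])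
  moreover have "0 < f\<^sup>2" using f by simp
  ultimately have lam_pos: "0 < lam" by linarith
  have "(\<Sum>j\<in>UNIV. complex_of_real (x j) * c j) = 0"
    using symmetric_matrix_eigenvectors_orthogonal[OF sym eig ceig ne] .
  then have "cmod \<mu> \<le> lam - f\<^sup>2 * lam\<^sup>2"
    using eigenvalue_orthogonal_to_perron_vector_le[OF lb ub xpos eig _ ceig _ c0] lam_pos by simp
  also have "\<dots> \<le> (1 - f ^ 4) * lam"
  proof -
    have "f ^ 4 * lam = (f\<^sup>2 * lam) * f\<^sup>2" by (simp add: power_numeral_reduce)
    also have "\<dots> \<le> (f\<^sup>2 * lam) * lam" using lam lam_pos by (intro mult_left_mono) simp_all
    finally show ?thesis by (simp add: algebra_simps power2_eq_square)
  qed
  finally show ?thesis .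
qed

definition cinner :: "complex ^ 'm \<Rightarrow> complex ^ 'm \<Rightarrow> complex" where
  "cinner u w = (\<Sum>q\<in>UNIV. cnj (u $ q) * w $ q)"

definition diag_vec :: "('n::finite \<Rightarrow> complex ^ 'n) \<Rightarrow> ('n \<Rightarrow> complex) \<Rightarrow> complex ^ ('n \<times> 'n)" where
  "diag_vec b c = (\<Sum>\<alpha>\<in>UNIV. c \<alpha> *s tensor (b \<alpha>) (b \<alpha>))"

lemma cinner_scale_right: "cinner u (k *s w) = k * cinner u w"
  by (simp add: cinner_def sum_distrib_left algebra_simps)

lemma cinner_sum_right: "cinner u (\<Sum>\<alpha>\<in>S. w \<alpha>) = (\<Sum>\<alpha>\<in>S. cinner u (w \<alpha>))"
  unfolding cinner_def by (simp add: sum_distrib_left sum.swap[of _ S UNIV])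

lemma cinner_tensor: "cinner (tensor u v) (tensor u' v') = cinner u u' * cinner v v'"
proof -
  have "cinner (tensor u v) (tensor u' v')
      = (\<Sum>p\<in>UNIV \<times> UNIV. cnj (u $ fst p * v $ snd p) * (u' $ fst p * v' $ snd p))"
    by (simp add: cinner_def tensor_def UNIV_Times_UNIV)
  also have "\<dots> = (\<Sum>i\<in>UNIV. \<Sum>j\<in>UNIV. (cnj (u $ i) * u' $ i) * (cnj (v $ j) * v' $ j))"
    by (simp add: sum.cartesian_product split_def algebra_simps)
  also have "\<dots> = cinner u u' * cinner v v'"
    by (simp add: cinner_def sum_product)
  finally show ?thesis .
qed

lemma cinner_diag_vec:
  assumes "orthonormal_family b"
  shows "cinner (tensor (b \<gamma>) (b \<gamma>)) (diag_vec b c) = c \<gamma>"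
proof -
  have ortho: "cinner (tensor (b \<gamma>) (b \<gamma>)) (tensor (b \<alpha>) (b \<alpha>)) = (if \<alpha> = \<gamma> then 1 else 0)" for \<alpha>
    using assms unfolding cinner_tensor by (simp add: cinner_def orthonormal_family_def)
  have "cinner (tensor (b \<gamma>) (b \<gamma>)) (diag_vec b c)
      = (\<Sum>\<alpha>\<in>UNIV. c \<alpha> * cinner (tensor (b \<gamma>) (b \<gamma>)) (tensor (b \<alpha>) (b \<alpha>)))"
    by (simp add: diag_vec_def cinner_sum_right cinner_scale_right)
  also have "\<dots> = (\<Sum>\<alpha>\<in>UNIV. if \<alpha> = \<gamma> then c \<gamma> else 0)" by (intro sum.cong) (auto simp: ortho)
  finally show ?thesis by simp
qed

lemma diag_vec_eq_0_iff:
  assumes "orthonormal_family b"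
  shows "diag_vec b c = 0 \<longleftrightarrow> (\<forall>\<alpha>. c \<alpha> = 0)"
proof
  assume "diag_vec b c = 0"
  then show "\<forall>\<alpha>. c \<alpha> = 0" using cinner_diag_vec[OF assms, of _ c] by (simp add: cinner_def)
qed (simp add: diag_vec_def)

lemma scale_diag_vec: "k *s diag_vec b c = diag_vec b (\<lambda>\<alpha>. k * c \<alpha>)"
  by (simp add: diag_vec_def vec_eq_iff sum_distrib_left mult.assoc)

lemma sum_matrix_vector_mult: "(\<Sum>\<alpha>\<in>S. M \<alpha>) *v w = (\<Sum>\<alpha>\<in>S. M \<alpha> *v w)"
  by (induction S rule: infinite_finite_induct) (simp_all add: matrix_vector_mult_add_rdistrib)

lemma scaleR_matrix_vector_mult:
  fixes M :: "complex ^ 'n ^ 'm"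
  shows "(r *\<^sub>R M) *v w = complex_of_real r *s (M *v w)"
  by (simp add: vec_eq_iff matrix_vector_mult_def sum_distrib_left mult.assoc) (simp add: scaleR_conv_of_real)

lemma outer_mult_vec: "outer u v *v w = cinner v w *s u"
  by (simp add: vec_eq_iff matrix_vector_mult_def outer_def cinner_def sum_distrib_left algebra_simps)

definition Kcoeff :: "real ^ 'n ^ 'n \<Rightarrow> 'n::finite \<Rightarrow> 'n \<Rightarrow> real" where
  "Kcoeff F \<alpha> \<beta> = (F $ \<alpha> $ \<beta>)\<^sup>2 / real CARD('n)"

lemma Kop_mult_vec:
  "Kop F b *v w = diag_vec b (\<lambda>\<alpha>. \<Sum>\<beta>\<in>UNIV.
      complex_of_real (Kcoeff F \<alpha> \<beta>) * cinner (tensor (b \<beta>) (b \<beta>)) w)"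
  by (simp add: Kop_def Kcoeff_def diag_vec_def sum_matrix_vector_mult scaleR_matrix_vector_mult
      outer_mult_vec vec_eq_iff sum_distrib_right mult.assoc)

lemma Kop_eigenpair_iff:
  assumes onb: "orthonormal_family b" and \<mu>: "\<mu> \<noteq> 0"
  shows "is_eigenpair (Kop F b) \<mu> v \<longleftrightarrow> (\<exists>c. v = diag_vec b c \<and> (\<exists>\<alpha>. c \<alpha> \<noteq> 0) \<and>
      (\<forall>\<alpha>. (\<Sum>\<beta>\<in>UNIV. complex_of_real (Kcoeff F \<alpha> \<beta>) * c \<beta>) = \<mu> * c \<alpha>))"
proof
  assume "is_eigenpair (Kop F b) \<mu> v"
  then have v0: "v \<noteq> 0" and Kv: "Kop F b *v v = \<mu> *s v" by (auto simp: is_eigenpair_def)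
  define c where "c \<beta> = cinner (tensor (b \<beta>) (b \<beta>)) v" for \<beta>
  define Ac where "Ac \<alpha> = (\<Sum>\<beta>\<in>UNIV. complex_of_real (Kcoeff F \<alpha> \<beta>) * c \<beta>)" for \<alpha>
  have "v = (1 / \<mu>) *s (Kop F b *v v)" using Kv \<mu> by simp
  also have "\<dots> = diag_vec b (\<lambda>\<alpha>. Ac \<alpha> / \<mu>)"
    unfolding Kop_mult_vec scale_diag_vec by (simp add: Ac_def c_def)
  finally have v: "v = diag_vec b (\<lambda>\<alpha>. Ac \<alpha> / \<mu>)" .
  have c: "c \<alpha> = Ac \<alpha> / \<mu>" for \<alpha>
    unfolding c_def by (subst v) (rule cinner_diag_vec[OF onb])
  show "\<exists>c. v = diag_vec b c \<and> (\<exists>\<alpha>. c \<alpha> \<noteq> 0) \<and>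
      (\<forall>\<alpha>. (\<Sum>\<beta>\<in>UNIV. complex_of_real (Kcoeff F \<alpha> \<beta>) * c \<beta>) = \<mu> * c \<alpha>)"
  proof (intro exI[of _ c] conjI allI)
    have "(\<lambda>\<alpha>. Ac \<alpha> / \<mu>) = c" using c by (simp add: fun_eq_iff)
    then show "v = diag_vec b c" using v by simp
    then show "\<exists>\<alpha>. c \<alpha> \<noteq> 0" using v0 diag_vec_eq_0_iff[OF onb] by blast
    show "(\<Sum>\<beta>\<in>UNIV. complex_of_real (Kcoeff F \<alpha> \<beta>) * c \<beta>) = \<mu> * c \<alpha>" for \<alpha>
      using c[of \<alpha>] \<mu> by (simp add: Ac_def)
  qed
next
  assume "\<exists>c. v = diag_vec b c \<and> (\<exists>\<alpha>. c \<alpha> \<noteq> 0) \<and>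
      (\<forall>\<alpha>. (\<Sum>\<beta>\<in>UNIV. complex_of_real (Kcoeff F \<alpha> \<beta>) * c \<beta>) = \<mu> * c \<alpha>)"
  then obtain c where v: "v = diag_vec b c" and c0: "\<exists>\<alpha>. c \<alpha> \<noteq> 0"
    and eig: "\<And>\<alpha>. (\<Sum>\<beta>\<in>UNIV. complex_of_real (Kcoeff F \<alpha> \<beta>) * c \<beta>) = \<mu> * c \<alpha>" by blast
  have "Kop F b *v v = diag_vec b (\<lambda>\<alpha>. \<mu> * c \<alpha>)"
    unfolding Kop_mult_vec v cinner_diag_vec[OF onb] eig ..
  then show "is_eigenpair (Kop F b) \<mu> v"
    using c0 diag_vec_eq_0_iff[OF onb] by (simp add: is_eigenpair_def v scale_diag_vec)
qed

lemma Kop_eigenpair_diag_vec_of_real: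
  assumes onb: "orthonormal_family b" and lam: "complex_of_real lam \<noteq> 0" and x0: "x \<alpha>\<^sub>0 \<noteq> 0"
    and eig: "\<And>\<alpha>. (\<Sum>\<beta>\<in>UNIV. Kcoeff F \<alpha> \<beta> * x \<beta>) = lam * x \<alpha>"
  shows "is_eigenpair (Kop F b) (complex_of_real lam) (diag_vec b (\<lambda>\<alpha>. complex_of_real (x \<alpha>)))"
  unfolding Kop_eigenpair_iff[OF onb lam]
proof (intro exI[of _ "\<lambda>\<alpha>. complex_of_real (x \<alpha>)"] conjI allI refl)
  show "\<exists>\<alpha>. complex_of_real (x \<alpha>) \<noteq> 0" using x0 by auto
  fix \<alpha>
  have "complex_of_real (\<Sum>\<beta>\<in>UNIV. Kcoeff F \<alpha> \<beta> * x \<beta>) = complex_of_real (lam * x \<alpha>)"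
    by (simp only: eig)
  then show "(\<Sum>\<beta>\<in>UNIV. complex_of_real (Kcoeff F \<alpha> \<beta>) * complex_of_real (x \<beta>))
      = complex_of_real lam * complex_of_real (x \<alpha>)" by simp
qed

lemma Kcoeff_sym:
  assumes "\<And>\<alpha> \<beta>. F $ \<alpha> $ \<beta> = F $ \<beta> $ \<alpha>"
  shows "Kcoeff F \<alpha> \<beta> = Kcoeff F \<beta> \<alpha>"
  unfolding Kcoeff_def assms[of \<alpha> \<beta>] ..

lemma Kcoeff_bounds:
  fixes F :: "real ^ 'n ^ 'n"
  assumes f: "0 < f" and bounds: "\<And>\<alpha> \<beta>. f \<le> F $ \<alpha> $ \<beta> \<and> F $ \<alpha> $ \<beta> \<le> 1"
  shows "f\<^sup>2 / real CARD('n) \<le> Kcoeff F \<alpha> \<beta>" and "Kcoeff F \<alpha> \<beta> \<le> 1 / real CARD('n)"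
proof -
  have "f\<^sup>2 \<le> (F $ \<alpha> $ \<beta>)\<^sup>2" using f bounds[of \<alpha> \<beta>] by (simp add: power_mono)
  then show "f\<^sup>2 / real CARD('n) \<le> Kcoeff F \<alpha> \<beta>" by (simp add: Kcoeff_def divide_right_mono)
  have "(F $ \<alpha> $ \<beta>)\<^sup>2 \<le> 1" using f bounds[of \<alpha> \<beta>] by (simp add: power_le_one)
  then show "Kcoeff F \<alpha> \<beta> \<le> 1 / real CARD('n)" by (simp add: Kcoeff_def divide_right_mono)
qed

lemma Kop_spectrum:
  fixes F :: "real ^ 'n ^ 'n" and f :: real and b :: "'n::finite \<Rightarrow> complex ^ 'n"
  assumes f_pos: "0 < f" and F_sym: "\<And>\<alpha> \<beta>. F $ \<alpha> $ \<beta> = F $ \<beta> $ \<alpha>"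
    and F_bounds: "\<And>\<alpha> \<beta>. f \<le> F $ \<alpha> $ \<beta> \<and> F $ \<alpha> $ \<beta> \<le> 1"
    and onb: "orthonormal_family b"
  obtains x lam where "\<And>\<alpha>. 0 < x \<alpha>" and "\<And>\<alpha> \<beta>. f\<^sup>2 * x \<alpha> \<le> x \<beta>" and "f\<^sup>2 \<le> lam" and "lam \<le> 1"
    and "is_eigenpair (Kop F b) (complex_of_real lam) (diag_vec b (\<lambda>\<alpha>. complex_of_real (x \<alpha>)))"
    and "\<And>v. is_eigenpair (Kop F b) (complex_of_real lam) v \<Longrightarrow>
           \<exists>c. v = c *s diag_vec b (\<lambda>\<alpha>. complex_of_real (x \<alpha>))"
    and "\<And>\<mu> v. is_eigenpair (Kop F b) \<mu> v \<Longrightarrow> \<mu> \<noteq> complex_of_real lam \<Longrightarrow>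
           \<mu> \<in> \<real> \<and> Re \<mu> \<le> (1 - f ^ 4) * lam"
proof -
  note sym = Kcoeff_sym[of F, OF F_sym]
  note lb = Kcoeff_bounds(1)[OF f_pos F_bounds] and ub = Kcoeff_bounds(2)[OF f_pos F_bounds]
  have "0 < f\<^sup>2 / real CARD('n)" using f_pos by simp
  then have pos: "0 < Kcoeff F \<alpha> \<beta>" for \<alpha> \<beta> using lb[of \<alpha> \<beta>] by linarith
  obtain x lam where xpos: "\<And>\<alpha>. 0 < x \<alpha>"
    and eig: "\<And>\<alpha>. (\<Sum>\<beta>\<in>UNIV. Kcoeff F \<alpha> \<beta> * x \<beta>) = lam * x \<alpha>"
    using symmetric_positive_matrix_positive_eigenvector[of "Kcoeff F", OF sym pos] by blast
  note bounds = positive_eigenvector_bounds[where A="Kcoeff F", OF lb ub f_pos xpos eig]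
  have "0 < f\<^sup>2" using f_pos by simp
  then have "0 < lam" using bounds(1) by linarith
  then have lam0: "complex_of_real lam \<noteq> 0" by simp
  define \<Psi> where "\<Psi> = diag_vec b (\<lambda>\<alpha>. complex_of_real (x \<alpha>))"
  have top: "is_eigenpair (Kop F b) (complex_of_real lam) \<Psi>"
    unfolding \<Psi>_def
    by (rule Kop_eigenpair_diag_vec_of_real[OF onb lam0 less_imp_neq[OF xpos, symmetric] eig])
  have simple: "\<exists>k. v = k *s \<Psi>" if ev: "is_eigenpair (Kop F b) (complex_of_real lam) v" for v
  proof -
    obtain c where v: "v = diag_vec b c"
      and ceig: "\<And>\<alpha>. (\<Sum>\<beta>\<in>UNIV. complex_of_real (Kcoeff F \<alpha> \<beta>) * c \<beta>) = complex_of_real lam * c \<alpha>"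
      using Kop_eigenpair_iff[OF onb lam0, THEN iffD1, OF ev] by blast
    obtain k where "\<And>\<alpha>. c \<alpha> = k * complex_of_real (x \<alpha>)"
      using perron_eigenvalue_simple[where A="Kcoeff F", OF lb ub f_pos xpos eig ceig] by blast
    then have "c = (\<lambda>\<alpha>. k * complex_of_real (x \<alpha>))" by (simp add: fun_eq_iff)
    then have "v = k *s \<Psi>" by (simp add: v \<Psi>_def scale_diag_vec)
    then show ?thesis ..
  qed
  have gap: "\<mu> \<in> \<real> \<and> Re \<mu> \<le> (1 - f ^ 4) * lam"
    if ev: "is_eigenpair (Kop F b) \<mu> v" and ne: "\<mu> \<noteq> complex_of_real lam" for \<mu> v
  proof (cases "\<mu> = 0")
    case True
    have "f \<le> 1" using F_bounds by (meson order_trans)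
    then have "f ^ 4 \<le> 1" using f_pos by (simp add: power_le_one)
    then show ?thesis using True \<open>0 < lam\<close> by simp
  next
    case False
    then obtain c where c0: "\<exists>\<alpha>. c \<alpha> \<noteq> 0"
      and ceig: "\<And>\<alpha>. (\<Sum>\<beta>\<in>UNIV. complex_of_real (Kcoeff F \<alpha> \<beta>) * c \<beta>) = \<mu> * c \<alpha>"
      using Kop_eigenpair_iff[OF onb False, THEN iffD1, OF ev] by blast
    have "\<mu> \<in> \<real>" using symmetric_real_matrix_eigenvalue_real[where A="Kcoeff F", OF sym ceig c0] .
    moreover have "cmod \<mu> \<le> (1 - f ^ 4) * lam"
      using perron_spectral_gap[where A="Kcoeff F", OF sym lb ub f_pos xpos eig ceig c0 ne] .
    ultimately show ?thesis using complex_Re_le_cmod[of \<mu>] by linarith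
  qed
  show thesis
    using that[OF xpos bounds(3) bounds(1,2) top[unfolded \<Psi>_def] simple[unfolded \<Psi>_def] gap] .
qed

lemma shift_scale_mult_vec:
  fixes K :: "complex ^ 'm ^ 'm"
  shows "(a *\<^sub>R mat 1 + r *\<^sub>R K) *v v = complex_of_real a *s v + complex_of_real r *s (K *v v)"
  by (simp add: matrix_vector_mult_add_rdistrib scaleR_matrix_vector_mult)

lemma is_eigenpair_shift_scale_iff:
  fixes K :: "complex ^ 'm ^ 'm"
  assumes "r \<noteq> 0"
  shows "is_eigenpair (a *\<^sub>R mat 1 + r *\<^sub>R K) (complex_of_real a + complex_of_real r * \<nu>) v
    \<longleftrightarrow> is_eigenpair K \<nu> v"
proof -
  have "(a *\<^sub>R mat 1 + r *\<^sub>R K) *v v = (complex_of_real a + complex_of_real r * \<nu>) *s v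
      \<longleftrightarrow> K *v v = \<nu> *s v"
    unfolding shift_scale_mult_vec using assms by (auto simp: vec_eq_iff algebra_simps)
  then show ?thesis by (simp add: is_eigenpair_def)
qed

lemma shift_scale_top_eigenpair:
  fixes K :: "complex ^ 'm ^ 'm" and a r lam g :: real
  assumes r: "0 < r"
    and top: "is_eigenpair K (complex_of_real lam) \<Psi>"
    and simple: "\<And>v. is_eigenpair K (complex_of_real lam) v \<Longrightarrow> \<exists>c. v = c *s \<Psi>"
    and gap: "\<And>\<mu> v. is_eigenpair K \<mu> v \<Longrightarrow> \<mu> \<noteq> complex_of_real lam \<Longrightarrow>
      \<mu> \<in> \<real> \<and> Re \<mu> \<le> lam - g * lam"
  defines "M \<equiv> a *\<^sub>R mat 1 + r *\<^sub>R K"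
  shows "is_eigenpair M (complex_of_real (a + r * lam)) \<Psi>
    \<and> (\<forall>v. is_eigenpair M (complex_of_real (a + r * lam)) v \<longrightarrow> (\<exists>c. v = c *s \<Psi>))
    \<and> (\<forall>\<mu> v. is_eigenpair M \<mu> v \<and> \<mu> \<noteq> complex_of_real (a + r * lam) \<longrightarrow>
         \<mu> \<in> \<real> \<and> Re \<mu> \<le> (a + r * lam) - r * g * lam)"
proof -
  have M: "is_eigenpair M \<mu> v \<longleftrightarrow> is_eigenpair K ((\<mu> - complex_of_real a) / complex_of_real r) v" for \<mu> v
    using is_eigenpair_shift_scale_iff[of r a K "(\<mu> - complex_of_real a) / complex_of_real r" v] r
    by (simp add: M_def)
  have lam: "(complex_of_real (a + r * lam) - complex_of_real a) / complex_of_real r = complex_of_real lam"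
    using r by (simp add: field_simps)
  show ?thesis
  proof (intro conjI allI impI)
    show "is_eigenpair M (complex_of_real (a + r * lam)) \<Psi>" using top M lam by simp
    show "\<exists>c. v = c *s \<Psi>" if "is_eigenpair M (complex_of_real (a + r * lam)) v" for v
      using that M lam simple by simp
    fix \<mu> v assume H: "is_eigenpair M \<mu> v \<and> \<mu> \<noteq> complex_of_real (a + r * lam)"
    define \<nu> where "\<nu> = (\<mu> - complex_of_real a) / complex_of_real r"
    have \<mu>: "\<mu> = complex_of_real a + complex_of_real r * \<nu>" using r by (simp add: \<nu>_def)
    have "\<nu> \<noteq> complex_of_real lam" using H \<mu> by auto
    then have \<nu>: "\<nu> \<in> \<real>" "Re \<nu> \<le> lam - g * lam" using gap H M unfolding \<nu>_def by blast+
    show "\<mu> \<in> \<real>" using \<nu>(1) \<mu> by (simp add: Reals_add Reals_mult)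
    have "Re \<mu> = a + r * Re \<nu>" using \<mu> by simp
    also have "\<dots> \<le> a + r * (lam - g * lam)" using \<nu>(2) r by simp
    finally show "Re \<mu> \<le> (a + r * lam) - r * g * lam" by (simp add: algebra_simps)
  qed
qed

theorem mainTheorem7:
  fixes F :: "real ^ 'n ^ 'n" and f :: real and b :: "'n::finite \<Rightarrow> complex ^ 'n"
  assumes f_pos: "0 < f" and f_le1: "f \<le> 1"
    and F_sym: "\<And>\<alpha> \<beta>. F $ \<alpha> $ \<beta> = F $ \<beta> $ \<alpha>"
    and F_bounds: "\<And>\<alpha> \<beta>. f \<le> F $ \<alpha> $ \<beta> \<and> F $ \<alpha> $ \<beta> \<le> 1"
    and onb: "orthonormal_family b"
  shows "\<exists>(lam::real) (x :: 'n \<Rightarrow> real).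
     let K = Kop F b;
         \<Psi> = (\<Sum>\<alpha>\<in>UNIV. complex_of_real (x \<alpha>) *s tensor (b \<alpha>) (b \<alpha>))
     in is_eigenpair K (complex_of_real lam) \<Psi>
      \<and> (\<forall>\<alpha>. 0 < x \<alpha>)
      \<and> Max (range x) / Min (range x) \<le> 1 / f\<^sup>2
      \<and> f\<^sup>2 \<le> lam \<and> lam \<le> 1
      \<and> (\<forall>v. is_eigenpair K (complex_of_real lam) v \<longrightarrow> (\<exists>c::complex. v = c *s \<Psi>))
      \<and> (\<forall>\<mu> v. is_eigenpair K \<mu> v \<and> \<mu> \<noteq> complex_of_real lam \<longrightarrow>
               \<mu> \<in> \<real> \<and> Re \<mu> \<le> (1 - f ^ 4) * lam)
      \<and> (\<forall>(a::real) (\<epsilon>::real). 0 < \<epsilon> \<longrightarrow>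
           (let M = a *\<^sub>R mat 1 + \<epsilon>\<^sup>2 *\<^sub>R K
            in is_eigenpair M (complex_of_real (a + \<epsilon>\<^sup>2 * lam)) \<Psi>
             \<and> (\<forall>v. is_eigenpair M (complex_of_real (a + \<epsilon>\<^sup>2 * lam)) v \<longrightarrow>
                     (\<exists>c::complex. v = c *s \<Psi>))
             \<and> (\<forall>\<mu> v. is_eigenpair M \<mu> v \<and> \<mu> \<noteq> complex_of_real (a + \<epsilon>\<^sup>2 * lam) \<longrightarrow>
                     \<mu> \<in> \<real> \<and> Re \<mu> \<le> (a + \<epsilon>\<^sup>2 * lam) - \<epsilon>\<^sup>2 * f ^ 4 * lam)))"
proof -
  obtain x lam where xpos: "\<And>\<alpha>. 0 < x \<alpha>" and ratio: "\<And>\<alpha> \<beta>. f\<^sup>2 * x \<alpha> \<le> x \<beta>"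
    and lam: "f\<^sup>2 \<le> lam" "lam \<le> 1"
    and top: "is_eigenpair (Kop F b) (complex_of_real lam) (diag_vec b (\<lambda>\<alpha>. complex_of_real (x \<alpha>)))"
    and simple: "\<And>v. is_eigenpair (Kop F b) (complex_of_real lam) v \<Longrightarrow>
           \<exists>c. v = c *s diag_vec b (\<lambda>\<alpha>. complex_of_real (x \<alpha>))"
    and gap: "\<And>\<mu> v. is_eigenpair (Kop F b) \<mu> v \<Longrightarrow> \<mu> \<noteq> complex_of_real lam \<Longrightarrow>
           \<mu> \<in> \<real> \<and> Re \<mu> \<le> (1 - f ^ 4) * lam"
    using Kop_spectrum[OF f_pos F_sym F_bounds onb] by blast
  have Psi: "(\<Sum>\<alpha>\<in>UNIV. complex_of_real (x \<alpha>) *s tensor (b \<alpha>) (b \<alpha>))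
      = diag_vec b (\<lambda>\<alpha>. complex_of_real (x \<alpha>))" by (simp add: diag_vec_def)
  have "(1 - f ^ 4) * lam = lam - f ^ 4 * lam" by (simp add: algebra_simps)
  note shifted = shift_scale_top_eigenpair[OF _ top simple gap[unfolded this]]
  show ?thesis
  proof (intro exI[of _ lam] exI[of _ x], unfold Let_def Psi, intro conjI)
    show "Max (range x) / Min (range x) \<le> 1 / f\<^sup>2"
      using Max_div_Min_range_le[OF xpos _ ratio] f_pos by simp
  qed ((intro allI impI, rule shifted, simp) | use xpos lam top simple gap in blast)+
qed

end
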